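(* Let $p\in]1,+\infty[$ and set $q=2$ if $p\in]1,2]$, $q=2(p-1)$ if $p\ge2$. Consider the implicit scheme $\frac{\mathbf u^k-\mathbf u^{k-1}}{\tau_{k-1}}=-\Delta_p^{\mathbf K}\mathbf u^k+\mathbf f^k$, $k\in[N]$, $\mathbf u^0=\mathbf g$, with step sizes $\tau_{k-1}>0$. Assume $I_n\mathbf K$ is nonnegative, measurable, symmetric with $\sup_x\int I_n\mathbf K(x,y)dy<\infty$; $I_n\mathbf g\in L^{\max(p,q)}(\Omega)$ with $\sup_n\|I_n\mathbf g\|_{L^q(\Omega)}<\infty$; $\bar f_n\in L^1([0,T];L^{\max(p,q)}(\Omega))$ with $\sup_n\|\bar f_n\|_{L^1([0,T];L^q(\Omega))}<\infty$. Assume in addition $\sup_n\|I_n\mathbf K\|_{L^{\infty,1}(\Omega^2)}<+\infty$ and $\sup_n\|\bar f_n\|_{\mathrm{BV}([0,T];L^2(\Omega))}<+\infty$. Then $\sup_{t\in[0,T],n\in\mathbb N}\|\tilde u_n(\cdot,t)-\bar u_n(\cdot,t)\|_{L^2(\Omega)}\le C\tau$, where $C>0$ does not depend on $(n,N,T)$.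
   Context: $d\ge1$, $\Omega=[0,1]^d$, hypercubic cells $\Omega^n_{\mathbf i}$ of measures $h_{\mathbf i}$, $I_n$ the piecewise-constant injector. $\Psi(s)=|s|^{p-2}s$; $(\Delta_p^{\mathbf K}\mathbf u)_{\mathbf i}=-\sum_{\mathbf j}h_{\mathbf j}\mathbf K_{\mathbf i\mathbf j}\Psi(\mathbf u_{\mathbf j}-\mathbf u_{\mathbf i})$. Time partition $0=t_0<\dots<t_N=T$, $\tau_{k-1}=t_k-t_{k-1}$, $\tau=\max\tau_{k-1}$. With $u_n^k=I_n\mathbf u^k$, $f_n^k=I_n\mathbf f^k$: for $t\in]t_{k-1},t_k]$, $\tilde u_n(x,t)=\frac{t_k-t}{\tau_{k-1}}u_n^{k-1}(x)+\frac{t-t_{k-1}}{\tau_{k-1}}u_n^k(x)$, $\bar u_n(x,t)=u_n^k(x)$, $\bar f_n(x,t)=f_n^k(x)$. $\|F\|_{L^{\infty,1}(\Omega^2)}=\sup_x\int|F(x,y)|dy$. For $h:\Omega\times[0,T]\to\mathbb R$, $\mathrm{Var}_2(h)=\sup_{0\le s_0<\dots<s_M\le T}\sum_i\|h(\cdot,s_i)-h(\cdot,s_{i-1})\|_{L^2(\Omega)}$ and $\|h\|_{\mathrm{BV}([0,T];L^2(\Omega))}=\|h(\cdot,0)\|_{L^2(\Omega)}+\mathrm{Var}_2(h)$. *)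

theory Defs
  imports "HOL-Analysis.Analysis"
begin

definition Omega :: "(real^'d) set" where
  "Omega = cbox 0 One"

definition is_grid :: "nat set \<Rightarrow> (nat \<Rightarrow> (real^'d) set) \<Rightarrow> bool" where
  "is_grid Idx cell \<longleftrightarrow> finite Idx \<and> Idx \<noteq> {} \<and>
     (\<forall>i\<in>Idx. \<forall>j\<in>Idx. i \<noteq> j \<longrightarrow> cell i \<inter> cell j = {}) \<and>
     (\<Union>i\<in>Idx. cell i) = Omega \<and>
     (\<forall>i\<in>Idx. \<exists>a s. s > 0 \<and> box a (a + s *\<^sub>R One) \<subseteq> cell i \<and>
                        cell i \<subseteq> cbox a (a + s *\<^sub>R One))"

definition hcell :: "(nat \<Rightarrow> (real^'d) set) \<Rightarrow> nat \<Rightarrow> real" where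
  "hcell cell i = measure lebesgue (cell i)"

definition injn :: "nat set \<Rightarrow> (nat \<Rightarrow> (real^'d) set) \<Rightarrow> (nat \<Rightarrow> real) \<Rightarrow> real^'d \<Rightarrow> real" where
  "injn Idx cell v x = (\<Sum>i\<in>Idx. v i * indicator (cell i) x)"

definition injK :: "nat set \<Rightarrow> (nat \<Rightarrow> (real^'d) set) \<Rightarrow> (nat \<Rightarrow> nat \<Rightarrow> real)
                    \<Rightarrow> real^'d \<Rightarrow> real^'d \<Rightarrow> real" where
  "injK Idx cell K x y =
     (\<Sum>i\<in>Idx. \<Sum>j\<in>Idx. K i j * indicator (cell i) x * indicator (cell j) y)"

definition Psi :: "real \<Rightarrow> real \<Rightarrow> real" where
  "Psi p s = \<bar>s\<bar> powr (p - 2) * s"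

definition DeltapK :: "real \<Rightarrow> nat set \<Rightarrow> (nat \<Rightarrow> (real^'d) set) \<Rightarrow> (nat \<Rightarrow> nat \<Rightarrow> real)
                        \<Rightarrow> (nat \<Rightarrow> real) \<Rightarrow> nat \<Rightarrow> real" where
  "DeltapK p Idx cell K u i = - (\<Sum>j\<in>Idx. hcell cell j * K i j * Psi p (u j - u i))"

definition qexp :: "real \<Rightarrow> real" where
  "qexp p = (if p \<le> 2 then 2 else 2 * (p - 1))"

definition Lnorm :: "real \<Rightarrow> (real^'d \<Rightarrow> real) \<Rightarrow> real" where
  "Lnorm r F = (LINT x:Omega|lebesgue. \<bar>F x\<bar> powr r) powr (1 / r)"

definition Linf1 :: "(real^'d \<Rightarrow> real^'d \<Rightarrow> real) \<Rightarrow> real" where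
  "Linf1 F = (SUP x\<in>Omega. LINT y:Omega|lebesgue. \<bar>F x y\<bar>)"

text \<open>Time partition 0 = t_0 < ... < t_N = T (T = t N), step sizes and \<tau>.\<close>
definition time_partition :: "nat \<Rightarrow> (nat \<Rightarrow> real) \<Rightarrow> bool" where
  "time_partition N t \<longleftrightarrow> N \<ge> 1 \<and> t 0 = 0 \<and> (\<forall>k<N. t k < t (Suc k))"

definition taumax :: "nat \<Rightarrow> (nat \<Rightarrow> real) \<Rightarrow> real" where
  "taumax N t = Max ((\<lambda>k. t (Suc k) - t k) ` {..<N})"

text \<open>Index k with s \<in> ]t_{k-1}, t_k] (k = 1 for s = 0).\<close>
definition kidx :: "(nat \<Rightarrow> real) \<Rightarrow> real \<Rightarrow> nat" where
  "kidx t s = (LEAST k. 1 \<le> k \<and> s \<le> t k)"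

definition tildeU :: "(nat \<Rightarrow> real) \<Rightarrow> (nat \<Rightarrow> real^'d \<Rightarrow> real) \<Rightarrow> real \<Rightarrow> real^'d \<Rightarrow> real" where
  "tildeU t U s x =
     (let k = kidx t s; tk = t (k - 1) in
        (t k - s) / (t k - tk) * U (k - 1) x + (s - tk) / (t k - tk) * U k x)"

definition barU :: "(nat \<Rightarrow> real) \<Rightarrow> (nat \<Rightarrow> real^'d \<Rightarrow> real) \<Rightarrow> real \<Rightarrow> real^'d \<Rightarrow> real" where
  "barU t U s x = U (kidx t s) x"

definition Var2 :: "real \<Rightarrow> (real \<Rightarrow> real^'d \<Rightarrow> real) \<Rightarrow> real" where
  "Var2 T h = Sup {(\<Sum>i\<in>{1..M}. Lnorm 2 (\<lambda>x. h (s i) x - h (s (i - 1)) x)) | s M.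
                    0 \<le> s 0 \<and> (\<forall>i<M. s i < s (Suc i)) \<and> s M \<le> T}"

definition BVnorm :: "real \<Rightarrow> (real \<Rightarrow> real^'d \<Rightarrow> real) \<Rightarrow> real" where
  "BVnorm T h = Lnorm 2 (h 0) + Var2 T h"

definition L1Lnorm :: "real \<Rightarrow> real \<Rightarrow> (real \<Rightarrow> real^'d \<Rightarrow> real) \<Rightarrow> real" where
  "L1Lnorm T r h = (LINT s:{0..T}|lborel. Lnorm r (h s))"

definition scheme :: "real \<Rightarrow> nat set \<Rightarrow> (nat \<Rightarrow> (real^'d) set) \<Rightarrow> (nat \<Rightarrow> nat \<Rightarrow> real)
     \<Rightarrow> (nat \<Rightarrow> real) \<Rightarrow> nat \<Rightarrow> (nat \<Rightarrow> real) \<Rightarrow> (nat \<Rightarrow> nat \<Rightarrow> real) \<Rightarrow> (nat \<Rightarrow> nat \<Rightarrow> real) \<Rightarrow> bool" where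
  "scheme p Idx cell K g N t f u \<longleftrightarrow>
     (\<forall>i\<in>Idx. u 0 i = g i) \<and>
     (\<forall>k\<in>{1..N}. \<forall>i\<in>Idx.
        (u k i - u (k - 1) i) / (t k - t (k - 1)) = - DeltapK p Idx cell K (u k) i + f k i)"

end

(* The scheme is the implicit Euler discretisation of u' = - \<Delta>\<^sub>p\<^sup>K u + f, and \<Delta>\<^sub>p\<^sup>K is
   monotone for the discrete L^2 inner product weighted by the cell measures: symmetrising the
   double sum turns it into a sum of (\<Psi>(a) - \<Psi>(b)) (a - b) \<ge> 0. Hence every resolvent step
   w + \<tau> \<Delta>\<^sub>p\<^sup>K w = a is a contraction in that norm.

   Comparing u^k with u^(k-1), which solves the same step equation with data
   u^(k-1) + \<tau>_(k-1) \<Delta>\<^sub>p\<^sup>K u^(k-1), the difference quotients v^k = (u^k - u^(k-1)) / \<tau>_(k-1)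
   satisfy |v^(k+1)| \<le> |v^k| + |f^(k+1) - f^k| and |v^1| \<le> |f^1| + |\<Delta>\<^sub>p\<^sup>K g|. So every |v^k| is
   bounded by the BV([0,T];L^2) norm of the piecewise-constant source plus |\<Delta>\<^sub>p\<^sup>K g|, and the
   latter is controlled by the L^(\<infinity>,1) bound on K and the L^q bound on g, via Cauchy-Schwarz and
   \<Psi>(s)^2 = |s|^(2(p-1)) \<le> 1 + |s|^q. On ]t_(k-1), t_k] the difference of the two interpolants is
   -(t_k - t) v^k, whence the bound C \<tau>. *)

theory Submission
  imports Defs
begin

lemma double_sum_antisym:
  fixes T :: "'a \<Rightarrow> 'a \<Rightarrow> 'b::ring"
  assumes "\<And>i j. i \<in> I \<Longrightarrow> j \<in> I \<Longrightarrow> T j i = - T i j"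
  shows "(\<Sum>i\<in>I. \<Sum>j\<in>I. T i j * x i) = - (\<Sum>i\<in>I. \<Sum>j\<in>I. T i j * x j)"
proof -
  have "(\<Sum>i\<in>I. \<Sum>j\<in>I. T i j * x i) = (\<Sum>j\<in>I. \<Sum>i\<in>I. T i j * x i)"
    by (rule sum.swap)
  also have "\<dots> = (\<Sum>j\<in>I. \<Sum>i\<in>I. - (T j i * x i))"
  proof (intro sum.cong refl)
    fix j i
    assume "j \<in> I" "i \<in> I"
    then show "T i j * x i = - (T j i * x i)"
      using assms[of j i] by simp
  qed
  finally show ?thesis
    by (simp add: sum_negf)
qed

lemma double_sum_symmetric_kernel:
  fixes w a :: "'a \<Rightarrow> 'b::comm_semiring_0" and K :: "'a \<Rightarrow> 'a \<Rightarrow> 'b"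
  assumes "\<And>i j. i \<in> I \<Longrightarrow> j \<in> I \<Longrightarrow> K i j = K j i"
  shows "(\<Sum>i\<in>I. \<Sum>j\<in>I. w i * w j * K i j * a j) = (\<Sum>i\<in>I. \<Sum>j\<in>I. w i * w j * K i j * a i)"
proof -
  have "(\<Sum>i\<in>I. \<Sum>j\<in>I. w i * w j * K i j * a j) = (\<Sum>j\<in>I. \<Sum>i\<in>I. w i * w j * K i j * a j)"
    by (rule sum.swap)
  also have "\<dots> = (\<Sum>j\<in>I. \<Sum>i\<in>I. w j * w i * K j i * a j)"
    using assms by (intro sum.cong refl) (simp add: mult_ac)
  finally show ?thesis .
qed

lemma sum_weighted_square_le:
  fixes P \<phi> :: "'a \<Rightarrow> real"
  assumes "\<And>j. j \<in> J \<Longrightarrow> 0 \<le> P j"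
  shows "(\<Sum>j\<in>J. P j * \<phi> j)\<^sup>2 \<le> (\<Sum>j\<in>J. P j) * (\<Sum>j\<in>J. P j * (\<phi> j)\<^sup>2)"
proof -
  have "(\<Sum>j\<in>J. P j * \<phi> j) = (\<Sum>j\<in>J. sqrt (P j) * (sqrt (P j) * \<phi> j))"
    using assms by (intro sum.cong) (auto simp flip: mult.assoc)
  also have "(\<dots>)\<^sup>2 \<le> (\<Sum>j\<in>J. (sqrt (P j))\<^sup>2) * (\<Sum>j\<in>J. (sqrt (P j) * \<phi> j)\<^sup>2)"
    by (rule Cauchy_Schwarz_ineq_sum)
  also have "\<dots> = (\<Sum>j\<in>J. P j) * (\<Sum>j\<in>J. P j * (\<phi> j)\<^sup>2)"
    using assms by (simp add: power_mult_distrib)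
  finally show ?thesis .
qed

lemma abs_diff_powr_le:
  fixes x y e q :: real
  assumes "0 < e" "e \<le> q"
  shows "\<bar>x - y\<bar> powr e \<le> 1 + 2 powr q * (\<bar>x\<bar> powr q + \<bar>y\<bar> powr q)"
proof -
  have "\<bar>x - y\<bar> powr e \<le> 1 + \<bar>x - y\<bar> powr q"
  proof (cases "\<bar>x - y\<bar> \<le> 1")
    case True
    then have "\<bar>x - y\<bar> powr e \<le> 1"
      using assms by (intro powr_le1) auto
    then show ?thesis
      using powr_ge_zero[of "\<bar>x - y\<bar>" q] by linarith
  next
    case False
    then have "\<bar>x - y\<bar> powr e \<le> \<bar>x - y\<bar> powr q"
      using assms by (intro powr_mono) auto
    then show ?thesis by simp
  qed
  also have "\<bar>x - y\<bar> powr q \<le> (2 * max \<bar>x\<bar> \<bar>y\<bar>) powr q"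
    using assms by (intro powr_mono2) auto
  also have "\<dots> = 2 powr q * max \<bar>x\<bar> \<bar>y\<bar> powr q"
    by (simp add: powr_mult)
  also have "\<dots> \<le> 2 powr q * (\<bar>x\<bar> powr q + \<bar>y\<bar> powr q)"
    by (intro mult_left_mono) (auto simp: max_def)
  finally show ?thesis by simp
qed

section \<open>The weighted discrete \<open>L\<^sup>2\<close> norm\<close>

definition cell_norm :: "nat set \<Rightarrow> (nat \<Rightarrow> (real^'d) set) \<Rightarrow> (nat \<Rightarrow> real) \<Rightarrow> real" where
  "cell_norm Idx cell w = L2_set (\<lambda>i. sqrt (hcell cell i) * w i) Idx"

lemma hcell_nonneg [simp]: "0 \<le> hcell cell i"
  unfolding hcell_def by simp

lemma cell_norm_nonneg [simp]: "0 \<le> cell_norm Idx cell w"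
  unfolding cell_norm_def by simp

lemma cell_norm_power2:
  "finite Idx \<Longrightarrow> (cell_norm Idx cell w)\<^sup>2 = (\<Sum>i\<in>Idx. hcell cell i * (w i)\<^sup>2)"
  unfolding cell_norm_def L2_set_def by (simp add: sum_nonneg power_mult_distrib)

lemma cell_norm_add_le:
  "cell_norm Idx cell (\<lambda>i. a i + b i) \<le> cell_norm Idx cell a + cell_norm Idx cell b"
  unfolding cell_norm_def using L2_set_triangle_ineq by (simp add: distrib_left)

lemma cell_norm_scale: "cell_norm Idx cell (\<lambda>i. c * w i) = \<bar>c\<bar> * cell_norm Idx cell w"
proof -
  have "cell_norm Idx cell (\<lambda>i. c * w i) = L2_set (\<lambda>i. \<bar>c\<bar> * (sqrt (hcell cell i) * w i)) Idx"
    unfolding cell_norm_def L2_set_def by (simp add: power_mult_distrib ac_simps)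
  then show ?thesis
    unfolding cell_norm_def by (simp add: L2_set_right_distrib)
qed

lemma cell_norm_cong:
  "(\<And>i. i \<in> Idx \<Longrightarrow> a i = b i) \<Longrightarrow> cell_norm Idx cell a = cell_norm Idx cell b"
  unfolding cell_norm_def by (rule L2_set_cong) auto

lemma cell_norm_diff_le: "cell_norm Idx cell (\<lambda>i. a i - b i) \<le> cell_norm Idx cell a + cell_norm Idx cell b"
  using cell_norm_add_le[of Idx cell a "\<lambda>i. (- 1) * b i"] cell_norm_scale[of Idx cell "- 1" b] by simp

lemma sum_hcell_mult_le:
  "(\<Sum>i\<in>Idx. hcell cell i * (a i * b i)) \<le> cell_norm Idx cell a * cell_norm Idx cell b"
proof -
  have "(\<Sum>i\<in>Idx. hcell cell i * (a i * b i))
      \<le> (\<Sum>i\<in>Idx. \<bar>sqrt (hcell cell i) * a i\<bar> * \<bar>sqrt (hcell cell i) * b i\<bar>)"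
  proof (rule sum_mono)
    fix i
    have "hcell cell i * (a i * b i) = (sqrt (hcell cell i) * a i) * (sqrt (hcell cell i) * b i)"
      by (simp add: algebra_simps flip: real_sqrt_mult)
    then show "hcell cell i * (a i * b i)
        \<le> \<bar>sqrt (hcell cell i) * a i\<bar> * \<bar>sqrt (hcell cell i) * b i\<bar>"
      by (metis abs_ge_self abs_mult)
  qed
  also have "\<dots> \<le> cell_norm Idx cell a * cell_norm Idx cell b"
    unfolding cell_norm_def by (rule L2_set_mult_ineq)
  finally show ?thesis .
qed

section \<open>Monotonicity of the discrete \<open>p\<close>-Laplacian\<close>

lemma Psi_minus: "Psi p (- s) = - Psi p s"
  unfolding Psi_def by simp

lemma Psi_eq_sgn_powr: "Psi p s = sgn s * \<bar>s\<bar> powr (p - 1)"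
proof (cases "s = 0")
  case False
  have "\<bar>s\<bar> powr (p - 1) = \<bar>s\<bar> powr (p - 2) * \<bar>s\<bar>"
    using False powr_add[of "\<bar>s\<bar>" "p - 2" 1] by simp
  then show ?thesis
    unfolding Psi_def by (cases "s > 0") (auto simp: sgn_if)
qed (simp add: Psi_def)

lemma Psi_mono:
  assumes "p > 1" "a \<le> b"
  shows "Psi p a \<le> Psi p b"
proof -
  have mono: "x powr (p - 1) \<le> y powr (p - 1)" if "0 \<le> x" "x \<le> y" for x y :: real
    using that assms(1) by (intro powr_mono2) auto
  have pos: "Psi p x = x powr (p - 1)" if "0 \<le> x" for x
    using that by (cases "x = 0") (auto simp: Psi_eq_sgn_powr)
  have neg: "Psi p x = - ((- x) powr (p - 1))" if "x \<le> 0" for x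
    using pos[of "- x"] that by (simp add: Psi_minus[of p "- x", simplified])
  consider "0 \<le> a" | "b \<le> 0" | "a \<le> 0" "0 \<le> b"
    by linarith
  then show ?thesis
  proof cases
    case 1
    then show ?thesis using assms(2) by (simp add: pos mono)
  next
    case 2
    then show ?thesis using assms(2) mono[of "- b" "- a"] by (simp add: neg)
  next
    case 3
    then have "Psi p a \<le> 0" "0 \<le> Psi p b"
      by (simp_all add: pos neg)
    then show ?thesis by linarith
  qed
qed

lemma Psi_monotone:
  assumes "p > 1"
  shows "0 \<le> (Psi p a - Psi p b) * (a - b)"
proof (cases "a \<le> b")
  case True
  then show ?thesis using Psi_mono[OF assms True] by (intro mult_nonpos_nonpos) auto
next
  case False
  then show ?thesis using Psi_mono[OF assms, of b a] by (intro mult_nonneg_nonneg) auto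
qed

lemma Psi_power2: "(Psi p s)\<^sup>2 = \<bar>s\<bar> powr (2 * (p - 1))"
proof (cases "s = 0")
  case False
  have "(Psi p s)\<^sup>2 = \<bar>s\<bar> powr (p - 1) * \<bar>s\<bar> powr (p - 1)"
    using False unfolding Psi_eq_sgn_powr by (simp add: power2_eq_square sgn_if)
  also have "\<dots> = \<bar>s\<bar> powr (2 * (p - 1))"
    by (simp flip: powr_add)
  finally show ?thesis .
qed (simp add: Psi_def)

lemma DeltapK_green:
  assumes K: "\<forall>i\<in>Idx. \<forall>j\<in>Idx. K i j = K j i"
  shows "(\<Sum>i\<in>Idx. hcell cell i * (DeltapK p Idx cell K u i * x i))
    = (\<Sum>i\<in>Idx. \<Sum>j\<in>Idx. hcell cell i * hcell cell j * K i j * Psi p (u j - u i) * (x j - x i)) / 2"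
proof -
  define T where "T i j = hcell cell i * hcell cell j * K i j * Psi p (u j - u i)" for i j
  have "T j i = - T i j" if "i \<in> Idx" "j \<in> Idx" for i j
    using K that Psi_minus[of p "u j - u i"] unfolding T_def by simp
  then have antisym: "(\<Sum>i\<in>Idx. \<Sum>j\<in>Idx. T i j * x i) = - (\<Sum>i\<in>Idx. \<Sum>j\<in>Idx. T i j * x j)"
    by (rule double_sum_antisym)
  have "(\<Sum>i\<in>Idx. hcell cell i * (DeltapK p Idx cell K u i * x i)) = - (\<Sum>i\<in>Idx. \<Sum>j\<in>Idx. T i j * x i)"
    unfolding DeltapK_def T_def by (simp add: sum_distrib_left sum_distrib_right sum_negf mult_ac)
  also have "\<dots> = (\<Sum>i\<in>Idx. \<Sum>j\<in>Idx. T i j * (x j - x i)) / 2"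
    using antisym by (simp add: right_diff_distrib sum_subtractf)
  finally show ?thesis
    unfolding T_def .
qed

lemma DeltapK_monotone:
  assumes p: "p > 1"
    and K: "\<forall>i\<in>Idx. \<forall>j\<in>Idx. 0 \<le> K i j \<and> K i j = K j i"
  shows "0 \<le> (\<Sum>i\<in>Idx. hcell cell i *
                   ((DeltapK p Idx cell K u i - DeltapK p Idx cell K w i) * (u i - w i)))"
proof -
  let ?h = "hcell cell"
  let ?x = "\<lambda>i. u i - w i"
  have Ksym: "\<forall>i\<in>Idx. \<forall>j\<in>Idx. K i j = K j i"
    using K by blast
  have "(\<Sum>i\<in>Idx. ?h i * ((DeltapK p Idx cell K u i - DeltapK p Idx cell K w i) * ?x i))
      = (\<Sum>i\<in>Idx. ?h i * (DeltapK p Idx cell K u i * ?x i))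
        - (\<Sum>i\<in>Idx. ?h i * (DeltapK p Idx cell K w i * ?x i))"
    unfolding sum_subtractf[symmetric] by (intro sum.cong) (simp_all add: algebra_simps)
  also have "\<dots> = (\<Sum>i\<in>Idx. \<Sum>j\<in>Idx. ?h i * ?h j * K i j * Psi p (u j - u i) * (?x j - ?x i)) / 2
      - (\<Sum>i\<in>Idx. \<Sum>j\<in>Idx. ?h i * ?h j * K i j * Psi p (w j - w i) * (?x j - ?x i)) / 2"
    by (simp only: DeltapK_green[OF Ksym])
  also have "\<dots> = (\<Sum>i\<in>Idx. \<Sum>j\<in>Idx. ?h i * ?h j * K i j
      * ((Psi p (u j - u i) - Psi p (w j - w i)) * ((u j - u i) - (w j - w i)))) / 2"
    unfolding diff_divide_distrib[symmetric] sum_subtractf[symmetric]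
    by (intro arg_cong[where f = "\<lambda>z. z / 2"] sum.cong refl) (simp add: algebra_simps)
  also have "0 \<le> \<dots>"
    using K by (intro divide_nonneg_pos sum_nonneg mult_nonneg_nonneg[OF _ Psi_monotone[OF p]]) auto
  finally show ?thesis .
qed

lemma resolvent_contraction:
  assumes fin: "finite Idx" and p: "p > 1"
    and K: "\<forall>i\<in>Idx. \<forall>j\<in>Idx. 0 \<le> K i j \<and> K i j = K j i"
    and tau: "\<tau> \<ge> 0"
    and u: "\<And>i. i \<in> Idx \<Longrightarrow> u i + \<tau> * DeltapK p Idx cell K u i = a i"
    and w: "\<And>i. i \<in> Idx \<Longrightarrow> w i + \<tau> * DeltapK p Idx cell K w i = b i"
  shows "cell_norm Idx cell (\<lambda>i. u i - w i) \<le> cell_norm Idx cell (\<lambda>i. a i - b i)"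
proof -
  let ?h = "hcell cell" and ?A = "DeltapK p Idx cell K"
  let ?e = "\<lambda>i. u i - w i"
  have "(cell_norm Idx cell ?e)\<^sup>2 = (\<Sum>i\<in>Idx. ?h i * (?e i * ?e i))"
    unfolding cell_norm_power2[OF fin] by (simp add: power2_eq_square)
  also have "\<dots> \<le> (\<Sum>i\<in>Idx. ?h i * (?e i * ?e i))
      + \<tau> * (\<Sum>i\<in>Idx. ?h i * ((?A u i - ?A w i) * (u i - w i)))"
    using DeltapK_monotone[OF p K, of cell u w] tau by simp
  also have "\<dots> = (\<Sum>i\<in>Idx. ?h i * (?e i * (a i - b i)))"
  proof -
    have "?h i * (?e i * (a i - b i))
        = ?h i * (?e i * ?e i) + \<tau> * (?h i * ((?A u i - ?A w i) * (u i - w i)))" if "i \<in> Idx" for i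
    proof -
      have d: "a i - b i = ?e i + \<tau> * (?A u i - ?A w i)"
        using u[OF that, symmetric] w[OF that, symmetric] by (simp add: algebra_simps)
      show ?thesis unfolding d by (simp add: algebra_simps)
    qed
    then show ?thesis
      by (simp add: sum.distrib sum_distrib_left)
  qed
  also have "\<dots> \<le> cell_norm Idx cell ?e * cell_norm Idx cell (\<lambda>i. a i - b i)"
    by (rule sum_hcell_mult_le)
  finally have le: "cell_norm Idx cell ?e * cell_norm Idx cell ?e
      \<le> cell_norm Idx cell ?e * cell_norm Idx cell (\<lambda>i. a i - b i)"
    by (simp add: power2_eq_square)
  show ?thesis
  proof (cases "cell_norm Idx cell ?e = 0")
    case False
    then have "0 < cell_norm Idx cell ?e"
      using cell_norm_nonneg[of Idx cell ?e] by linarith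
    then show ?thesis
      using le by (simp only: mult_le_cancel_left_pos)
  qed simp
qed

section \<open>Grids and piecewise-constant functions\<close>

lemma measure_Omega: "measure lebesgue (Omega :: (real^'d) set) = 1"
proof -
  have "(One :: real^'d) \<bullet> i = 1" if "i \<in> Basis" for i
    using that by (simp add: inner_sum_left sum.If_cases inner_Basis)
  then show ?thesis
    unfolding Omega_def by (simp add: measure_lborel_cbox_eq)
qed

lemma is_grid_finite: "is_grid Idx cell \<Longrightarrow> finite Idx"
  unfolding is_grid_def by blast

lemma is_grid_disjoint:
  "is_grid Idx cell \<Longrightarrow> i \<in> Idx \<Longrightarrow> j \<in> Idx \<Longrightarrow> i \<noteq> j \<Longrightarrow> cell i \<inter> cell j = {}"
  unfolding is_grid_def by blast

lemma is_grid_Union: "is_grid Idx cell \<Longrightarrow> (\<Union>i\<in>Idx. cell i) = Omega"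
  unfolding is_grid_def by blast

lemma is_grid_cube:
  assumes "is_grid Idx cell" "i \<in> Idx"
  obtains a s where "s > 0" "box a (a + s *\<^sub>R One) \<subseteq> cell i" "cell i \<subseteq> cbox a (a + s *\<^sub>R One)"
proof -
  have "\<forall>i\<in>Idx. \<exists>a s. s > 0 \<and> box a (a + s *\<^sub>R One) \<subseteq> cell i \<and> cell i \<subseteq> cbox a (a + s *\<^sub>R One)"
    using assms(1) unfolding is_grid_def by (elim conjE)
  then show ?thesis
    using assms(2) that by blast
qed

lemma grid_cell:
  fixes cell :: "nat \<Rightarrow> (real^'d) set"
  assumes "is_grid Idx cell" "i \<in> Idx"
  shows "cell i \<in> lmeasurable" "cell i \<subseteq> Omega" "cell i \<noteq> {}"
proof -
  obtain a s where as: "s > 0" "box a (a + s *\<^sub>R One) \<subseteq> cell i" "cell i \<subseteq> cbox a (a + s *\<^sub>R One)"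
    using is_grid_cube[OF assms] .
  let ?b = "a + s *\<^sub>R (One::real^'d)"
  have "negligible (cell i - box a ?b)"
    by (rule negligible_subset[OF negligible_frontier_interval[of a ?b]]) (use as in blast)
  then have "box a ?b \<union> (cell i - box a ?b) \<in> sets lebesgue"
    by (intro sets.Un) (simp_all add: negligible_imp_sets)
  moreover have "box a ?b \<union> (cell i - box a ?b) = cell i"
    using as(2) by auto
  ultimately have "cell i \<in> sets lebesgue"
    by (simp only:)
  then show "cell i \<in> lmeasurable"
    by (rule bounded_set_imp_lmeasurable[OF bounded_subset[OF bounded_cbox as(3)]])
  show "cell i \<subseteq> Omega"
    using is_grid_Union[OF assms(1)] assms(2) by blast
  have "(One :: real^'d) \<bullet> j = 1" if "j \<in> Basis" for j
    using that by (simp add: inner_sum_left sum.If_cases inner_Basis)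
  then have "a + (s / 2) *\<^sub>R One \<in> box a ?b"
    unfolding mem_box using as(1) by (simp add: inner_add_left)
  then show "cell i \<noteq> {}"
    using as(2) by blast
qed

lemma grid_cell_exists: "is_grid Idx cell \<Longrightarrow> x \<in> Omega \<Longrightarrow> \<exists>i\<in>Idx. x \<in> cell i"
  using is_grid_Union by blast

lemma sum_indicator_grid_cell:
  assumes "is_grid Idx cell" "i \<in> Idx" "x \<in> cell i"
  shows "(\<Sum>j\<in>Idx. c j * indicator (cell j) x) = (c i :: real)"
proof -
  have "(\<Sum>j\<in>Idx. c j * indicator (cell j) x) = (\<Sum>j\<in>{i}. c j * indicator (cell j) x)"
    using assms is_grid_disjoint[OF assms(1)]
    by (intro sum.mono_neutral_right is_grid_finite) (auto split: split_indicator)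
  then show ?thesis
    using assms(3) by simp
qed

lemma injn_grid_cell: "is_grid Idx cell \<Longrightarrow> i \<in> Idx \<Longrightarrow> x \<in> cell i \<Longrightarrow> injn Idx cell v x = v i"
  unfolding injn_def by (rule sum_indicator_grid_cell)

lemma injn_linear:
  "injn Idx cell (\<lambda>i. a * v i + b * w i) x = a * injn Idx cell v x + b * injn Idx cell w x"
  unfolding injn_def by (simp add: sum.distrib sum_distrib_left algebra_simps)

lemma set_integral_injn:
  assumes grid: "is_grid Idx cell"
  shows "(LINT x:Omega|lebesgue. \<phi> (injn Idx cell v x)) = (\<Sum>i\<in>Idx. \<phi> (v i) * hcell cell i)"
proof -
  have "indicator Omega x * \<phi> (injn Idx cell v x) = (\<Sum>i\<in>Idx. \<phi> (v i) * indicator (cell i) x)" for x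
  proof (cases "x \<in> Omega")
    case True
    then obtain i where "i \<in> Idx" "x \<in> cell i"
      using grid_cell_exists[OF grid] by blast
    then show ?thesis
      using True injn_grid_cell[OF grid] sum_indicator_grid_cell[OF grid] by simp
  next
    case False
    then have "x \<notin> cell i" if "i \<in> Idx" for i
      using grid_cell(2)[OF grid that] by blast
    then show ?thesis
      using False by simp
  qed
  then have "(LINT x:Omega|lebesgue. \<phi> (injn Idx cell v x))
      = (LINT x|lebesgue. (\<Sum>i\<in>Idx. \<phi> (v i) * indicator (cell i) x))"
    unfolding set_lebesgue_integral_def by simp
  also have "\<dots> = (\<Sum>i\<in>Idx. \<phi> (v i) * hcell cell i)"
    using grid_cell(1)[OF grid] by (simp add: lmeasurable_iff_integrable hcell_def)
  finally show ?thesis .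
qed

lemma Lnorm_injn:
  "is_grid Idx cell \<Longrightarrow> Lnorm r (injn Idx cell v) = (\<Sum>i\<in>Idx. \<bar>v i\<bar> powr r * hcell cell i) powr (1 / r)"
  unfolding Lnorm_def using set_integral_injn[of Idx cell "\<lambda>y. \<bar>y\<bar> powr r" v] by simp

lemma Lnorm2_injn:
  assumes grid: "is_grid Idx cell"
  shows "Lnorm 2 (injn Idx cell v) = cell_norm Idx cell v"
proof -
  have "Lnorm 2 (injn Idx cell v) = sqrt (\<Sum>i\<in>Idx. hcell cell i * (v i)\<^sup>2)"
    unfolding Lnorm_injn[OF grid]
    by (subst powr_half_sqrt) (simp_all add: sum_nonneg mult.commute flip: powr_realpow)
  also have "\<dots> = cell_norm Idx cell v"
    by (simp add: cell_norm_power2[OF is_grid_finite[OF grid], symmetric])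
  finally show ?thesis .
qed

lemma sum_hcell_grid:
  fixes cell :: "nat \<Rightarrow> (real^'d) set"
  assumes grid: "is_grid Idx cell"
  shows "(\<Sum>i\<in>Idx. hcell cell i) = 1"
  using set_integral_injn[OF grid, of "\<lambda>_. 1" "\<lambda>_. 0"] measure_Omega[where 'd = 'd]
  by (simp add: set_lebesgue_integral_def)

lemma injK_grid_cell:
  assumes "is_grid Idx cell" "i \<in> Idx" "x \<in> cell i"
  shows "injK Idx cell K x y = injn Idx cell (K i) y"
proof -
  have "injK Idx cell K x y = (\<Sum>i'\<in>Idx. (\<Sum>j\<in>Idx. K i' j * indicator (cell j) y) * indicator (cell i') x)"
    unfolding injK_def sum_distrib_right by (simp add: mult_ac)
  also have "\<dots> = (\<Sum>j\<in>Idx. K i j * indicator (cell j) y)"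
    by (rule sum_indicator_grid_cell[OF assms])
  finally show ?thesis
    unfolding injn_def .
qed

lemma row_sum_le_Linf1:
  assumes grid: "is_grid Idx cell" and i: "i \<in> Idx"
    and K: "\<forall>i\<in>Idx. \<forall>j\<in>Idx. 0 \<le> K i j"
  shows "(\<Sum>j\<in>Idx. hcell cell j * K i j) \<le> Linf1 (injK Idx cell K)"
proof -
  define row where "row i' = (\<Sum>j\<in>Idx. \<bar>K i' j\<bar> * hcell cell j)" for i'
  have row: "(LINT y:Omega|lebesgue. \<bar>injK Idx cell K x y\<bar>) = row i'"
    if "i' \<in> Idx" "x \<in> cell i'" for x i'
    unfolding row_def injK_grid_cell[OF grid that]
    using set_integral_injn[OF grid, of abs "K i'"] by simp
  have "(\<lambda>x. LINT y:Omega|lebesgue. \<bar>injK Idx cell K x y\<bar>) ` Omega \<subseteq> row ` Idx"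
    using grid_cell_exists[OF grid] row by force
  then have bdd: "bdd_above ((\<lambda>x. LINT y:Omega|lebesgue. \<bar>injK Idx cell K x y\<bar>) ` Omega)"
    using is_grid_finite[OF grid] by (meson bdd_above_finite finite_imageI finite_subset)
  obtain x where x: "x \<in> cell i"
    using grid_cell(3)[OF grid i] by blast
  have "(\<Sum>j\<in>Idx. hcell cell j * K i j) = row i"
    unfolding row_def using K i by (intro sum.cong) auto
  also have "\<dots> = (LINT y:Omega|lebesgue. \<bar>injK Idx cell K x y\<bar>)"
    using row[OF i x] by simp
  also have "\<dots> \<le> Linf1 (injK Idx cell K)"
    unfolding Linf1_def using grid_cell(2)[OF grid i] x by (intro cSUP_upper[OF _ bdd]) auto
  finally show ?thesis .
qed

section \<open>The \<open>p\<close>-Laplacian of the initial datum\<close>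

lemma DeltapK_power2_le:
  assumes p: "p > 1" and q: "2 * (p - 1) \<le> q"
    and K: "\<forall>j\<in>Idx. 0 \<le> K i j" and row: "(\<Sum>j\<in>Idx. hcell cell j * K i j) \<le> M"
  shows "(DeltapK p Idx cell K g i)\<^sup>2
    \<le> M * (\<Sum>j\<in>Idx. hcell cell j * K i j * (1 + 2 powr q * \<bar>g i\<bar> powr q + 2 powr q * \<bar>g j\<bar> powr q))"
proof -
  let ?P = "\<lambda>j. hcell cell j * K i j"
  have P0: "0 \<le> ?P j" if "j \<in> Idx" for j
    using K that by simp
  have "(DeltapK p Idx cell K g i)\<^sup>2 = (\<Sum>j\<in>Idx. ?P j * Psi p (g j - g i))\<^sup>2"
    unfolding DeltapK_def by simp
  also have "\<dots> \<le> (\<Sum>j\<in>Idx. ?P j) * (\<Sum>j\<in>Idx. ?P j * (Psi p (g j - g i))\<^sup>2)"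
    using P0 by (rule sum_weighted_square_le)
  also have "\<dots> \<le> M * (\<Sum>j\<in>Idx. ?P j * (1 + 2 powr q * \<bar>g i\<bar> powr q + 2 powr q * \<bar>g j\<bar> powr q))"
  proof (rule mult_mono)
    have "(Psi p (g j - g i))\<^sup>2 \<le> 1 + 2 powr q * \<bar>g i\<bar> powr q + 2 powr q * \<bar>g j\<bar> powr q" for j
      using abs_diff_powr_le[of "2 * (p - 1)" q "g j" "g i"] p q
      unfolding Psi_power2 by (simp add: algebra_simps)
    then show "(\<Sum>j\<in>Idx. ?P j * (Psi p (g j - g i))\<^sup>2)
        \<le> (\<Sum>j\<in>Idx. ?P j * (1 + 2 powr q * \<bar>g i\<bar> powr q + 2 powr q * \<bar>g j\<bar> powr q))"
      using P0 by (intro sum_mono mult_left_mono)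
    show "0 \<le> M"
      using row sum_nonneg[of Idx ?P, OF P0] by linarith
  qed (use row P0 in \<open>auto intro: sum_nonneg\<close>)
  finally show ?thesis .
qed

lemma kernel_double_sum_le:
  assumes K: "\<forall>i\<in>Idx. \<forall>j\<in>Idx. 0 \<le> K i j \<and> K i j = K j i"
    and row: "\<And>i. i \<in> Idx \<Longrightarrow> (\<Sum>j\<in>Idx. hcell cell j * K i j) \<le> M"
    and hsum: "(\<Sum>i\<in>Idx. hcell cell i) = 1"
    and \<gamma>: "\<And>i. 0 \<le> \<gamma> i"
  shows "(\<Sum>i\<in>Idx. \<Sum>j\<in>Idx. hcell cell i * hcell cell j * K i j * (1 + \<gamma> i + \<gamma> j))
    \<le> M * (1 + 2 * (\<Sum>i\<in>Idx. hcell cell i * \<gamma> i))"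
proof -
  let ?h = "hcell cell"
  define S where "S X = (\<Sum>i\<in>Idx. \<Sum>j\<in>Idx. ?h i * ?h j * K i j * X i j)" for X
  have "S (\<lambda>i j. 1 + \<gamma> i + \<gamma> j) = S (\<lambda>i j. 1 + \<gamma> i) + S (\<lambda>i j. \<gamma> j)"
    unfolding S_def by (simp add: distrib_left sum.distrib)
  also have "S (\<lambda>i j. \<gamma> j) = S (\<lambda>i j. \<gamma> i)"
    unfolding S_def using K by (intro double_sum_symmetric_kernel) auto
  also have "S (\<lambda>i j. 1 + \<gamma> i) + S (\<lambda>i j. \<gamma> i)
      = (\<Sum>i\<in>Idx. ?h i * (1 + 2 * \<gamma> i) * (\<Sum>j\<in>Idx. ?h j * K i j))"
    unfolding S_def by (simp add: sum_distrib_left algebra_simps flip: sum.distrib)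
  also have "\<dots> \<le> (\<Sum>i\<in>Idx. ?h i * (1 + 2 * \<gamma> i) * M)"
    using row \<gamma> by (intro sum_mono mult_left_mono) auto
  also have "\<dots> = M * ((\<Sum>i\<in>Idx. ?h i) + 2 * (\<Sum>i\<in>Idx. ?h i * \<gamma> i))"
    by (simp add: sum.distrib sum_distrib_left algebra_simps)
  finally show ?thesis
    unfolding S_def hsum .
qed

lemma cell_norm_DeltapK_le:
  assumes fin: "finite Idx" and p: "p > 1" and q: "2 * (p - 1) \<le> q"
    and K: "\<forall>i\<in>Idx. \<forall>j\<in>Idx. 0 \<le> K i j \<and> K i j = K j i"
    and row: "\<And>i. i \<in> Idx \<Longrightarrow> (\<Sum>j\<in>Idx. hcell cell j * K i j) \<le> M"
    and hsum: "(\<Sum>i\<in>Idx. hcell cell i) = 1"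
  shows "(cell_norm Idx cell (DeltapK p Idx cell K g))\<^sup>2
    \<le> M\<^sup>2 * (1 + 2 * 2 powr q * (\<Sum>i\<in>Idx. hcell cell i * \<bar>g i\<bar> powr q))"
proof -
  let ?h = "hcell cell"
  define \<gamma> where "\<gamma> i = 2 powr q * \<bar>g i\<bar> powr q" for i
  have M0: "0 \<le> M"
  proof -
    obtain i where i: "i \<in> Idx"
      using hsum by fastforce
    show ?thesis
      using row[OF i] K i sum_nonneg[of Idx "\<lambda>j. ?h j * K i j"] by fastforce
  qed
  have pointwise: "(DeltapK p Idx cell K g i)\<^sup>2 \<le> M * (\<Sum>j\<in>Idx. ?h j * K i j * (1 + \<gamma> i + \<gamma> j))"
    if "i \<in> Idx" for i
  proof -
    have "\<forall>j\<in>Idx. 0 \<le> K i j"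
      using K that by blast
    from DeltapK_power2_le[where K = K and i = i, OF p q this row[OF that]] show ?thesis
      unfolding \<gamma>_def .
  qed
  have "(cell_norm Idx cell (DeltapK p Idx cell K g))\<^sup>2 = (\<Sum>i\<in>Idx. ?h i * (DeltapK p Idx cell K g i)\<^sup>2)"
    by (rule cell_norm_power2[OF fin])
  also have "\<dots> \<le> (\<Sum>i\<in>Idx. ?h i * (M * (\<Sum>j\<in>Idx. ?h j * K i j * (1 + \<gamma> i + \<gamma> j))))"
    using pointwise by (intro sum_mono mult_left_mono) auto
  also have "\<dots> = M * (\<Sum>i\<in>Idx. \<Sum>j\<in>Idx. ?h i * ?h j * K i j * (1 + \<gamma> i + \<gamma> j))"
    by (simp add: sum_distrib_left mult_ac)
  also have "\<dots> \<le> M * (M * (1 + 2 * (\<Sum>i\<in>Idx. ?h i * \<gamma> i)))"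
    using kernel_double_sum_le[OF K row hsum] M0 by (intro mult_left_mono) (auto simp: \<gamma>_def)
  finally show ?thesis
    by (simp add: \<gamma>_def sum_distrib_left power2_eq_square mult_ac)
qed

lemma cell_norm_DeltapK_data_le:
  assumes grid: "is_grid Idx cell" and p: "p > 1"
    and K: "\<forall>i\<in>Idx. \<forall>j\<in>Idx. 0 \<le> K i j \<and> K i j = K j i"
    and MK: "Linf1 (injK Idx cell K) \<le> MK"
    and Mg: "Lnorm (qexp p) (injn Idx cell g) \<le> Mg"
  shows "cell_norm Idx cell (DeltapK p Idx cell K g)
    \<le> \<bar>MK\<bar> * sqrt (1 + 2 * 2 powr qexp p * \<bar>Mg\<bar> powr qexp p)"
proof -
  let ?q = "qexp p" and ?h = "hcell cell"
  have q: "2 * (p - 1) \<le> ?q" "0 < ?q"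
    using p unfolding qexp_def by auto
  have "Lnorm ?q (injn Idx cell g) powr ?q = (\<Sum>i\<in>Idx. \<bar>g i\<bar> powr ?q * ?h i) powr (1 / ?q * ?q)"
    unfolding Lnorm_injn[OF grid] by (rule powr_powr)
  also have "\<dots> = (\<Sum>i\<in>Idx. ?h i * \<bar>g i\<bar> powr ?q)"
    using q by (simp add: sum_nonneg mult.commute)
  finally have "(\<Sum>i\<in>Idx. ?h i * \<bar>g i\<bar> powr ?q) = Lnorm ?q (injn Idx cell g) powr ?q" ..
  also have "\<dots> \<le> \<bar>Mg\<bar> powr ?q"
    using Mg q unfolding Lnorm_def by (intro powr_mono2) auto
  finally have data: "(\<Sum>i\<in>Idx. ?h i * \<bar>g i\<bar> powr ?q) \<le> \<bar>Mg\<bar> powr ?q" .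
  have row: "(\<Sum>j\<in>Idx. ?h j * K i j) \<le> \<bar>MK\<bar>" if "i \<in> Idx" for i
    using row_sum_le_Linf1[OF grid that] K MK by fastforce
  have "(cell_norm Idx cell (DeltapK p Idx cell K g))\<^sup>2
      \<le> \<bar>MK\<bar>\<^sup>2 * (1 + 2 * 2 powr ?q * (\<Sum>i\<in>Idx. ?h i * \<bar>g i\<bar> powr ?q))"
    by (rule cell_norm_DeltapK_le[OF is_grid_finite[OF grid] p q(1) K row sum_hcell_grid[OF grid]])
  also have "\<dots> \<le> \<bar>MK\<bar>\<^sup>2 * (1 + 2 * 2 powr ?q * \<bar>Mg\<bar> powr ?q)"
    using data by (intro mult_left_mono add_left_mono) auto
  finally have "cell_norm Idx cell (DeltapK p Idx cell K g)
      \<le> sqrt (\<bar>MK\<bar>\<^sup>2 * (1 + 2 * 2 powr ?q * \<bar>Mg\<bar> powr ?q))"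
    by (rule real_le_rsqrt)
  then show ?thesis
    by (simp add: real_sqrt_mult)
qed

section \<open>Time partitions and the variation of the source\<close>

lemma time_partition_less:
  assumes tp: "time_partition N t" and "j \<le> N" "i < j"
  shows "t i < t j"
  using assms(2,3)
proof (induction j)
  case (Suc j)
  then have "t j < t (Suc j)"
    using tp unfolding time_partition_def by simp
  then show ?case
    using Suc by (cases "i = j") auto
qed simp

lemma time_step_pos: "time_partition N t \<Longrightarrow> 1 \<le> k \<Longrightarrow> k \<le> N \<Longrightarrow> 0 < t k - t (k - 1)"
  using time_partition_less[of N t k "k - 1"] by simp

lemma time_step_le_taumax:
  assumes "1 \<le> k" "k \<le> N"
  shows "t k - t (k - 1) \<le> taumax N t"
proof -
  have "t k - t (k - 1) \<in> (\<lambda>k. t (Suc k) - t k) ` {..<N}"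
    using assms by (intro image_eqI[of _ _ "k - 1"]) auto
  then show ?thesis
    unfolding taumax_def by (intro Max_ge) auto
qed

lemma taumax_pos: "time_partition N t \<Longrightarrow> 0 < taumax N t"
  using time_step_pos[of N t 1] time_step_le_taumax[of 1 N t]
  unfolding time_partition_def by force

lemma kidx_bounds:
  assumes tp: "time_partition N t" and s: "s \<le> t N"
  shows "1 \<le> kidx t s" "kidx t s \<le> N" "s \<le> t (kidx t s)"
proof -
  have N: "1 \<le> N"
    using tp unfolding time_partition_def by simp
  have "1 \<le> kidx t s \<and> s \<le> t (kidx t s)"
    unfolding kidx_def by (rule LeastI[of _ N]) (use N s in simp)
  then show "1 \<le> kidx t s" "s \<le> t (kidx t s)"
    by simp_all
  show "kidx t s \<le> N"
    unfolding kidx_def by (rule Least_le) (use N s in simp)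
qed

lemma kidx_lower:
  assumes tp: "time_partition N t" and s: "0 \<le> s" "s \<le> t N"
  shows "t (kidx t s - 1) \<le> s"
proof (cases "kidx t s = 1")
  case True
  then show ?thesis
    using tp s unfolding time_partition_def by simp
next
  case False
  then have "kidx t s - 1 < kidx t s" "1 \<le> kidx t s - 1"
    using kidx_bounds(1)[OF tp s(2)] by auto
  then show ?thesis
    using not_less_Least[of "kidx t s - 1" "\<lambda>k. 1 \<le> k \<and> s \<le> t k"]
    unfolding kidx_def by simp
qed

lemma kidx_time:
  assumes tp: "time_partition N t" and "1 \<le> i" "i \<le> N"
  shows "kidx t (t i) = i"
  unfolding kidx_def
proof (rule Least_equality)
  show "\<And>k. 1 \<le> k \<and> t i \<le> t k \<Longrightarrow> i \<le> k"
    using time_partition_less[OF tp assms(3)] by (meson leD leI)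
qed (use assms in simp)

lemma kidx_0:
  assumes "time_partition N t"
  shows "kidx t 0 = 1"
proof -
  have "0 \<le> t 1"
    using assms unfolding time_partition_def by force
  then show ?thesis
    unfolding kidx_def by (intro Least_equality) auto
qed

lemma kidx_mono:
  assumes tp: "time_partition N t" and "s \<le> s'" "s' \<le> t N"
  shows "kidx t s \<le> kidx t s'"
  unfolding kidx_def[of t s]
  by (rule Least_le) (use kidx_bounds[OF tp assms(3)] assms(2) in simp)

text \<open>\<open>barU\<close> never samples \<open>f 0\<close> (\<open>kidx\<close> is at least 1), so the variation starts with \<open>f 2 - f 1\<close>.\<close>

definition cell_variation :: "nat set \<Rightarrow> (nat \<Rightarrow> (real^'d) set) \<Rightarrow> (nat \<Rightarrow> nat \<Rightarrow> real) \<Rightarrow> nat \<Rightarrow> real" where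
  "cell_variation Idx cell f m = (\<Sum>j\<in>{2..m}. cell_norm Idx cell (\<lambda>i. f j i - f (j - 1) i))"

lemma cell_variation_nonneg: "0 \<le> cell_variation Idx cell f m"
  unfolding cell_variation_def by (simp add: sum_nonneg)

lemma cell_variation_mono: "m \<le> m' \<Longrightarrow> cell_variation Idx cell f m \<le> cell_variation Idx cell f m'"
  unfolding cell_variation_def by (intro sum_mono2) auto

lemma cell_variation_Suc:
  "1 \<le> m \<Longrightarrow> cell_variation Idx cell f (Suc m)
    = cell_variation Idx cell f m + cell_norm Idx cell (\<lambda>i. f (Suc m) i - f m i)"
  unfolding cell_variation_def by (simp add: sum.cl_ivl_Suc)

lemma cell_norm_diff_le_cell_variation:
  assumes "1 \<le> b" "b \<le> a"
  shows "cell_norm Idx cell (\<lambda>i. f a i - f b i) \<le> cell_variation Idx cell f a - cell_variation Idx cell f b"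
  using assms(2)
proof (induction a rule: dec_induct)
  case base
  then show ?case
    using cell_norm_scale[of Idx cell 0 "\<lambda>_. 0"] by simp
next
  case (step n)
  have "cell_norm Idx cell (\<lambda>i. f (Suc n) i - f b i)
      \<le> cell_norm Idx cell (\<lambda>i. f (Suc n) i - f n i) + cell_norm Idx cell (\<lambda>i. f n i - f b i)"
    using cell_norm_add_le[of Idx cell "\<lambda>i. f (Suc n) i - f n i" "\<lambda>i. f n i - f b i"] by simp
  then show ?case
    using step cell_variation_Suc[of n Idx cell f] assms(1) by simp
qed

lemma Lnorm2_barU_diff:
  "is_grid Idx cell \<Longrightarrow>
    Lnorm 2 (\<lambda>x. barU t (\<lambda>k. injn Idx cell (f k)) a x - barU t (\<lambda>k. injn Idx cell (f k)) b x)
      = cell_norm Idx cell (\<lambda>i. f (kidx t a) i - f (kidx t b) i)"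
  unfolding barU_def injn_def
  by (simp add: Lnorm2_injn[unfolded injn_def, symmetric] sum_subtractf left_diff_distrib)

lemma partition_sum_le_cell_variation:
  assumes grid: "is_grid Idx cell" and tp: "time_partition N t"
    and s: "\<forall>i<M. s i < s (Suc i)" "s M \<le> t N"
  shows "(\<Sum>i\<in>{1..M}. Lnorm 2 (\<lambda>x. barU t (\<lambda>k. injn Idx cell (f k)) (s i) x
                                 - barU t (\<lambda>k. injn Idx cell (f k)) (s (i - 1)) x))
    \<le> cell_variation Idx cell f (kidx t (s M)) - cell_variation Idx cell f (kidx t (s 0))"
  using s
proof (induction M)
  case (Suc M)
  then have "s M < s (Suc M)" "s M \<le> t N"
    by auto
  then have "cell_norm Idx cell (\<lambda>i. f (kidx t (s (Suc M))) i - f (kidx t (s M)) i)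
      \<le> cell_variation Idx cell f (kidx t (s (Suc M))) - cell_variation Idx cell f (kidx t (s M))"
    using Suc.prems(2)
    by (intro cell_norm_diff_le_cell_variation kidx_bounds(1)[OF tp] kidx_mono[OF tp]) auto
  moreover have "\<forall>i<M. s i < s (Suc i)"
    using Suc.prems(1) by simp
  ultimately show ?case
    using Suc.IH \<open>s M \<le> t N\<close> by (simp add: Lnorm2_barU_diff[OF grid])
qed simp

lemma time_partition_sum_eq_cell_variation:
  assumes grid: "is_grid Idx cell" and tp: "time_partition N t"
  shows "(\<Sum>i\<in>{1..N}. Lnorm 2 (\<lambda>x. barU t (\<lambda>k. injn Idx cell (f k)) (t i) x
                                 - barU t (\<lambda>k. injn Idx cell (f k)) (t (i - 1)) x))
    = cell_variation Idx cell f N" (is "(\<Sum>i\<in>{1..N}. ?L i) = _")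
proof -
  have N: "1 \<le> N" and t0: "t 0 = 0"
    using tp unfolding time_partition_def by auto
  have "(\<Sum>i\<in>{1..N}. ?L i) = ?L 1 + (\<Sum>i\<in>{2..N}. ?L i)"
    using N by (simp add: sum.atLeast_Suc_atMost numeral_2_eq_2)
  also have "?L 1 = 0"
    using kidx_time[OF tp order_refl N] kidx_0[OF tp] t0
    by (simp add: Lnorm2_barU_diff[OF grid] cell_norm_def L2_set_def)
  also have "(\<Sum>i\<in>{2..N}. ?L i) = cell_variation Idx cell f N"
    unfolding cell_variation_def
  proof (intro sum.cong refl)
    fix i
    assume "i \<in> {2..N}"
    then have "kidx t (t i) = i" "kidx t (t (i - 1)) = i - 1"
      using kidx_time[OF tp] by auto
    then show "?L i = cell_norm Idx cell (\<lambda>x. f i x - f (i - 1) x)"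
      by (simp add: Lnorm2_barU_diff[OF grid])
  qed
  finally show ?thesis
    by simp
qed

lemma cell_variation_le_Var2:
  assumes grid: "is_grid Idx cell" and tp: "time_partition N t"
  shows "cell_variation Idx cell f N \<le> Var2 (t N) (barU t (\<lambda>k. injn Idx cell (f k)))"
proof -
  let ?F = "barU t (\<lambda>k. injn Idx cell (f k))"
  let ?L = "\<lambda>s i. Lnorm 2 (\<lambda>x. ?F (s i) x - ?F (s (i - 1)) x)"
  define S where "S = {(\<Sum>i\<in>{1..M}. ?L s i) | s M.
                    0 \<le> s 0 \<and> (\<forall>i<M. s i < s (Suc i)) \<and> s M \<le> t N}"
  have "z \<le> cell_variation Idx cell f N" if "z \<in> S" for z
  proof -
    obtain s M where z: "z = (\<Sum>i\<in>{1..M}. ?L s i)"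
      and s: "\<forall>i<M. s i < s (Suc i)" "s M \<le> t N"
      using \<open>z \<in> S\<close> unfolding S_def by blast
    have "z \<le> cell_variation Idx cell f (kidx t (s M)) - cell_variation Idx cell f (kidx t (s 0))"
      unfolding z by (rule partition_sum_le_cell_variation[OF grid tp s])
    then show ?thesis
      using cell_variation_mono[OF kidx_bounds(2)[OF tp s(2)], of Idx cell f]
        cell_variation_nonneg[of Idx cell f "kidx t (s 0)"] by linarith
  qed
  then have bdd: "bdd_above S"
    by (rule bdd_aboveI)
  have "(\<Sum>i\<in>{1..N}. ?L t i) \<in> S"
    using tp unfolding S_def time_partition_def by (intro CollectI exI[of _ t] exI[of _ N]) auto
  then have "(\<Sum>i\<in>{1..N}. ?L t i) \<le> Sup S"
    by (rule cSup_upper[OF _ bdd])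
  then show ?thesis
    unfolding time_partition_sum_eq_cell_variation[OF grid tp] S_def Var2_def .
qed

lemma cell_norm_plus_variation_le_BVnorm:
  assumes grid: "is_grid Idx cell" and tp: "time_partition N t"
  shows "cell_norm Idx cell (f 1) + cell_variation Idx cell f N
    \<le> BVnorm (t N) (barU t (\<lambda>k. injn Idx cell (f k)))"
proof -
  have "Lnorm 2 (barU t (\<lambda>k. injn Idx cell (f k)) 0) = cell_norm Idx cell (f 1)"
    unfolding barU_def kidx_0[OF tp] Lnorm2_injn[OF grid] ..
  then show ?thesis
    unfolding BVnorm_def using cell_variation_le_Var2[OF grid tp, of f] by simp
qed

section \<open>The scheme\<close>

definition diff_quot :: "(nat \<Rightarrow> real) \<Rightarrow> (nat \<Rightarrow> nat \<Rightarrow> real) \<Rightarrow> nat \<Rightarrow> nat \<Rightarrow> real" where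
  "diff_quot t u k i = (u k i - u (k - 1) i) / (t k - t (k - 1))"

lemma scheme_diff_quot:
  "scheme p Idx cell K g N t f u \<Longrightarrow> 1 \<le> k \<Longrightarrow> k \<le> N \<Longrightarrow> i \<in> Idx \<Longrightarrow>
    diff_quot t u k i = f k i - DeltapK p Idx cell K (u k) i"
  unfolding scheme_def diff_quot_def by simp

lemma scheme_diff_quot_le:
  assumes fin: "finite Idx" and p: "p > 1"
    and K: "\<forall>i\<in>Idx. \<forall>j\<in>Idx. 0 \<le> K i j \<and> K i j = K j i"
    and tp: "time_partition N t" and sch: "scheme p Idx cell K g N t f u"
    and k: "1 \<le> k" "k \<le> N"
  shows "cell_norm Idx cell (diff_quot t u k)
    \<le> cell_norm Idx cell (\<lambda>i. f k i - DeltapK p Idx cell K (u (k - 1)) i)"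
proof -
  let ?A = "DeltapK p Idx cell K"
  define \<tau> where "\<tau> = t k - t (k - 1)"
  have \<tau>: "\<tau> > 0"
    unfolding \<tau>_def using time_step_pos[OF tp k] .
  have "u k i + \<tau> * ?A (u k) i = u (k - 1) i + \<tau> * f k i" if "i \<in> Idx" for i
    using scheme_diff_quot[OF sch k that] \<tau> by (simp add: diff_quot_def \<tau>_def field_simps)
  then have "cell_norm Idx cell (\<lambda>i. u k i - u (k - 1) i)
      \<le> cell_norm Idx cell (\<lambda>i. (u (k - 1) i + \<tau> * f k i) - (u (k - 1) i + \<tau> * ?A (u (k - 1)) i))"
    using \<tau> by (intro resolvent_contraction[OF fin p K, where \<tau> = \<tau>]) auto
  also have "\<dots> = \<tau> * cell_norm Idx cell (\<lambda>i. f k i - ?A (u (k - 1)) i)"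
    using \<tau> cell_norm_scale[of Idx cell \<tau> "\<lambda>i. f k i - ?A (u (k - 1)) i"] by (simp add: algebra_simps)
  finally have "cell_norm Idx cell (\<lambda>i. u k i - u (k - 1) i)
      \<le> \<tau> * cell_norm Idx cell (\<lambda>i. f k i - ?A (u (k - 1)) i)" .
  moreover have "cell_norm Idx cell (\<lambda>i. u k i - u (k - 1) i) = \<tau> * cell_norm Idx cell (diff_quot t u k)"
    using \<tau> cell_norm_scale[of Idx cell \<tau> "diff_quot t u k"]
    by (simp add: diff_quot_def \<tau>_def)
  ultimately show ?thesis
    using \<tau> by simp
qed

lemma scheme_diff_quot_bound:
  assumes fin: "finite Idx" and p: "p > 1"
    and K: "\<forall>i\<in>Idx. \<forall>j\<in>Idx. 0 \<le> K i j \<and> K i j = K j i"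
    and tp: "time_partition N t" and sch: "scheme p Idx cell K g N t f u"
  shows "1 \<le> k \<Longrightarrow> k \<le> N \<Longrightarrow> cell_norm Idx cell (diff_quot t u k)
    \<le> cell_norm Idx cell (f 1) + cell_norm Idx cell (DeltapK p Idx cell K g) + cell_variation Idx cell f k"
proof (induction k rule: nat_induct_at_least)
  case base
  have "DeltapK p Idx cell K (u 0) i = DeltapK p Idx cell K g i" if "i \<in> Idx" for i
    using sch that unfolding scheme_def DeltapK_def by simp
  then have "cell_norm Idx cell (\<lambda>i. f 1 i - DeltapK p Idx cell K (u 0) i)
      = cell_norm Idx cell (\<lambda>i. f 1 i - DeltapK p Idx cell K g i)"
    by (intro cell_norm_cong) simp
  then have "cell_norm Idx cell (diff_quot t u 1)
      \<le> cell_norm Idx cell (\<lambda>i. f 1 i - DeltapK p Idx cell K g i)"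
    using scheme_diff_quot_le[OF fin p K tp sch order_refl base] by simp
  then show ?case
    using cell_norm_diff_le[of Idx cell "f 1" "DeltapK p Idx cell K g"] by (simp add: cell_variation_def)
next
  case (Suc n)
  have "f (Suc n) i - DeltapK p Idx cell K (u n) i = (f (Suc n) i - f n i) + diff_quot t u n i"
    if "i \<in> Idx" for i
    using scheme_diff_quot[OF sch Suc.hyps _ that] Suc.prems by simp
  then have "cell_norm Idx cell (\<lambda>i. f (Suc n) i - DeltapK p Idx cell K (u (Suc n - 1)) i)
      = cell_norm Idx cell (\<lambda>i. (f (Suc n) i - f n i) + diff_quot t u n i)"
    by (intro cell_norm_cong) simp
  then have "cell_norm Idx cell (diff_quot t u (Suc n))
      \<le> cell_norm Idx cell (\<lambda>i. (f (Suc n) i - f n i) + diff_quot t u n i)"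
    using scheme_diff_quot_le[OF fin p K tp sch _ Suc.prems] by simp
  also have "\<dots> \<le> cell_norm Idx cell (\<lambda>i. f (Suc n) i - f n i) + cell_norm Idx cell (diff_quot t u n)"
    by (rule cell_norm_add_le)
  finally show ?case
    using Suc cell_variation_Suc[OF Suc.hyps, of Idx cell f] by simp
qed

lemma Lnorm2_tildeU_minus_barU:
  assumes grid: "is_grid Idx cell" and tp: "time_partition N t" and s: "s \<le> t N"
  defines "k \<equiv> kidx t s"
  shows "Lnorm 2 (\<lambda>x. tildeU t (\<lambda>k. injn Idx cell (u k)) s x - barU t (\<lambda>k. injn Idx cell (u k)) s x)
    = (t k - s) * cell_norm Idx cell (diff_quot t u k)"
proof -
  have "1 \<le> k" "k \<le> N" "s \<le> t k"
    unfolding k_def using kidx_bounds[OF tp s] by auto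
  define \<tau> where "\<tau> = t k - t (k - 1)"
  have \<tau>: "0 < \<tau>"
    unfolding \<tau>_def using \<open>1 \<le> k\<close> \<open>k \<le> N\<close> by (rule time_step_pos[OF tp])
  define c where "c = (t k - s) / \<tau>"
  have weight: "(s - t (k - 1)) / \<tau> = 1 - c"
    unfolding c_def using \<tau> by (simp add: \<tau>_def field_simps)
  have "tildeU t (\<lambda>k. injn Idx cell (u k)) s x - barU t (\<lambda>k. injn Idx cell (u k)) s x
      = c * injn Idx cell (u (k - 1)) x + (- c) * injn Idx cell (u k) x" for x
    unfolding tildeU_def barU_def Let_def k_def[symmetric] \<tau>_def[symmetric] c_def[symmetric] weight
    by (simp add: algebra_simps)
  also have "\<dots> x = injn Idx cell (\<lambda>i. (- (t k - s)) * diff_quot t u k i) x" for x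
    unfolding injn_linear[symmetric] c_def diff_quot_def \<tau>_def[symmetric]
    by (rule arg_cong[where f = "\<lambda>v. injn Idx cell v x"]) (use \<tau> in \<open>simp add: fun_eq_iff field_simps\<close>)
  finally show ?thesis
    using \<open>s \<le> t k\<close> by (simp add: Lnorm2_injn[OF grid] cell_norm_scale)
qed

lemma interpolation_error_le:
  assumes grid: "is_grid Idx cell" and p: "p > 1"
    and K: "\<forall>i\<in>Idx. \<forall>j\<in>Idx. 0 \<le> K i j \<and> K i j = K j i"
    and tp: "time_partition N t" and sch: "scheme p Idx cell K g N t f u"
    and s: "s \<in> {0..t N}"
  shows "Lnorm 2 (\<lambda>x. tildeU t (\<lambda>k. injn Idx cell (u k)) s x - barU t (\<lambda>k. injn Idx cell (u k)) s x)
    \<le> taumax N t * (BVnorm (t N) (barU t (\<lambda>k. injn Idx cell (f k)))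
                     + cell_norm Idx cell (DeltapK p Idx cell K g))"
proof -
  define k where "k = kidx t s"
  have k: "1 \<le> k" "k \<le> N" "s \<le> t k" "t (k - 1) \<le> s"
    using s kidx_bounds[OF tp] kidx_lower[OF tp] unfolding k_def by auto
  have "Lnorm 2 (\<lambda>x. tildeU t (\<lambda>k. injn Idx cell (u k)) s x - barU t (\<lambda>k. injn Idx cell (u k)) s x)
      = (t k - s) * cell_norm Idx cell (diff_quot t u k)"
    using s unfolding k_def by (intro Lnorm2_tildeU_minus_barU[OF grid tp]) auto
  also have "\<dots> \<le> (t k - t (k - 1)) * (cell_norm Idx cell (f 1)
      + cell_norm Idx cell (DeltapK p Idx cell K g) + cell_variation Idx cell f k)"
    using k scheme_diff_quot_bound[OF is_grid_finite[OF grid] p K tp sch k(1,2)]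
    by (intro mult_mono) auto
  also have "\<dots> \<le> taumax N t * (BVnorm (t N) (barU t (\<lambda>k. injn Idx cell (f k)))
      + cell_norm Idx cell (DeltapK p Idx cell K g))"
    using k time_step_le_taumax[OF k(1,2), of t] cell_variation_mono[OF k(2), of Idx cell f]
      cell_norm_plus_variation_le_BVnorm[OF grid tp, of f] cell_variation_nonneg[of Idx cell f k]
    by (intro mult_mono) auto
  finally show ?thesis .
qed

theorem lemma6p14:
  fixes p MK Mg Mf Mb :: real
  assumes "p > 1"
  shows "\<exists>C>0. \<forall>(Idx::nat set) (cell::nat \<Rightarrow> (real^'d) set) K g N t f u.
     is_grid Idx cell
     \<and> (\<forall>i\<in>Idx. \<forall>j\<in>Idx. 0 \<le> K i j \<and> K i j = K j i)
     \<and> Linf1 (injK Idx cell K) \<le> MK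
     \<and> Lnorm (qexp p) (injn Idx cell g) \<le> Mg
     \<and> time_partition N t
     \<and> L1Lnorm (t N) (qexp p) (barU t (\<lambda>k. injn Idx cell (f k))) \<le> Mf
     \<and> BVnorm (t N) (barU t (\<lambda>k. injn Idx cell (f k))) \<le> Mb
     \<and> scheme p Idx cell K g N t f u
     \<longrightarrow> (\<forall>s\<in>{0..t N}.
           Lnorm 2 (\<lambda>x. tildeU t (\<lambda>k. injn Idx cell (u k)) s x
                       - barU t (\<lambda>k. injn Idx cell (u k)) s x) \<le> C * taumax N t)"
proof -
  define C where "C = \<bar>Mb\<bar> + \<bar>MK\<bar> * sqrt (1 + 2 * 2 powr qexp p * \<bar>Mg\<bar> powr qexp p) + 1"
  have C: "C > 0"
    unfolding C_def by (simp add: add_nonneg_pos)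
  have "Lnorm 2 (\<lambda>x. tildeU t (\<lambda>k. injn Idx cell (u k)) s x - barU t (\<lambda>k. injn Idx cell (u k)) s x)
      \<le> C * taumax N t"
    if grid: "is_grid Idx cell" and K: "\<forall>i\<in>Idx. \<forall>j\<in>Idx. 0 \<le> K i j \<and> K i j = K j i"
      and MK: "Linf1 (injK Idx cell K) \<le> MK" and Mg: "Lnorm (qexp p) (injn Idx cell g) \<le> Mg"
      and tp: "time_partition N t" and Mb: "BVnorm (t N) (barU t (\<lambda>k. injn Idx cell (f k))) \<le> Mb"
      and sch: "scheme p Idx cell K g N t f u" and s: "s \<in> {0..t N}"
    for Idx and cell :: "nat \<Rightarrow> (real^'d) set" and K g N t f u s
  proof -
    have "Lnorm 2 (\<lambda>x. tildeU t (\<lambda>k. injn Idx cell (u k)) s x - barU t (\<lambda>k. injn Idx cell (u k)) s x)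
        \<le> taumax N t * (BVnorm (t N) (barU t (\<lambda>k. injn Idx cell (f k)))
                         + cell_norm Idx cell (DeltapK p Idx cell K g))"
      by (rule interpolation_error_le[OF grid assms K tp sch s])
    also have "\<dots> \<le> taumax N t * C"
      using Mb cell_norm_DeltapK_data_le[OF grid assms K MK Mg] taumax_pos[OF tp]
      unfolding C_def by (intro mult_left_mono) auto
    finally show ?thesis
      by (simp add: mult.commute)
  qed
  then show ?thesis
    using C by blast
qed

end
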